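(* Let $(\mathbf k((G)),l)$ be a series field with prelogarithmic section and $\psi$ a morphism from $(\mathbf k((G)),l)$ to itself. Let $U\subseteq H$ be subgroups of $G$ satisfying $(\dagger)$: $\mathrm{Log}(h)<|f|$ for all $h\in H$ and all nonzero $f\in\mathbf k((H^{>U}))$. Then $\psi(U)\subseteq\psi(H)$ also satisfy $(\dagger)$, i.e. $\mathrm{Log}(h_1)<|f_1|$ for all $h_1\in\psi(H)$ and all nonzero $f_1\in\mathbf k((\psi(H)^{>\psi(U)}))$.
   Context: Let $\mathbf k$ be an ordered field and $(G,\cdot,<)$ a totally ordered abelian group (written multiplicatively). $\mathbf k((G))$ denotes the field of generalized power series $\alpha=\sum_{g\in G}\alpha(g)\,g$ ($\alpha(g)\in\mathbf k$) with anti-well-ordered support, usual operations, canonical valuation $v(\alpha)=\max\operatorname{supp}\alpha$ and ordering $\alpha>0$ iff $\alpha(v(\alpha))>0$. For $S\subseteq G$, $\mathbf k((S))=\{\alpha:\operatorname{supp}\alpha\subseteq S\}$; for a subgroup $H$ and $A\subseteq G$, $H^{>A}=\{h\in H:h>a\ \forall a\in A\}$. A prelogarithmic section is an order-preserving group embedding $l:(G,\cdot)\to(\mathbf k((G^{>1})),+)$ (with $G^{>1}=\{g>1\}$). For $g\in G$, $\mathrm{Log}(g)=l(g)$ ($\mathrm{Log}$ being the logarithm of the EL-series field $\mathbf k((G))^{EL}$, which extends $l$). An order-preserving group embedding $\psi:G\to G$, extended to $\mathbf k((G))$ by $\psi(\sum a_gg)=\sum a_g\psi(g)$, is a morphism of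 $(\mathbf k((G)),l)$ to itself if $\psi\circ l=l\circ\psi$ on $G$. *)

theory Defs
  imports Main
begin

text \<open>The ordered abelian group G is written
additively (type class linordered_ab_group_add): the group unit 1 of the paper is 0,
products g*h are g+h and G^{>1} is {g. g > 0}.\<close>

definition supp :: "('g \<Rightarrow> 'k::zero) \<Rightarrow> 'g set" where
  "supp a = {g. a g \<noteq> 0}"

definition anti_wellordered :: "'g::linorder set \<Rightarrow> bool" where
  "anti_wellordered S \<longleftrightarrow> wf {(x, y). x \<in> S \<and> y \<in> S \<and> y < x}"

definition series_on :: "'g::linorder set \<Rightarrow> ('g \<Rightarrow> 'k::zero) set" where
  "series_on S = {a. anti_wellordered (supp a) \<and> supp a \<subseteq> S}"

definition val :: "('g::linorder \<Rightarrow> 'k::zero) \<Rightarrow> 'g" where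
  "val a = (GREATEST g. a g \<noteq> 0)"

definition series_pos :: "('g::linorder \<Rightarrow> 'k::linordered_field) \<Rightarrow> bool" where
  "series_pos a \<longleftrightarrow> a \<noteq> (\<lambda>_. 0) \<and> a (val a) > 0"

definition series_less :: "('g::linorder \<Rightarrow> 'k::linordered_field) \<Rightarrow> ('g \<Rightarrow> 'k) \<Rightarrow> bool" where
  "series_less a b \<longleftrightarrow> series_pos (\<lambda>g. b g - a g)"

definition series_abs :: "('g::linorder \<Rightarrow> 'k::linordered_field) \<Rightarrow> ('g \<Rightarrow> 'k)" where
  "series_abs a = (if series_pos (\<lambda>g. - a g) then (\<lambda>g. - a g) else a)"

definition add_subgroup :: "'g::ab_group_add set \<Rightarrow> bool" where
  "add_subgroup H \<longleftrightarrow> 0 \<in> H \<and> (\<forall>x\<in>H. \<forall>y\<in>H. x + y \<in> H) \<and> (\<forall>x\<in>H. - x \<in> H)"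

definition above :: "'g::linorder set \<Rightarrow> 'g set \<Rightarrow> 'g set" where
  "above H A = {h \<in> H. \<forall>a\<in>A. a < h}"

definition prelog_section :: "('g::linordered_ab_group_add \<Rightarrow> ('g \<Rightarrow> 'k::linordered_field)) \<Rightarrow> bool" where
  "prelog_section l \<longleftrightarrow>
     (\<forall>g. l g \<in> series_on {x. 0 < x}) \<and>
     (\<forall>g h. l (g + h) = (\<lambda>x. l g x + l h x)) \<and>
     (\<forall>g h. g < h \<longrightarrow> series_less (l g) (l h))"

definition ordered_group_embedding :: "('g::linordered_ab_group_add \<Rightarrow> 'g) \<Rightarrow> bool" where
  "ordered_group_embedding \<psi> \<longleftrightarrow> (\<forall>g h. \<psi> (g + h) = \<psi> g + \<psi> h) \<and> strict_mono \<psi>"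

text \<open>extension of psi to series: psi(sum a_g g) = sum a_g psi(g)\<close>
definition series_map :: "('g \<Rightarrow> 'g) \<Rightarrow> ('g \<Rightarrow> 'k::zero) \<Rightarrow> ('g \<Rightarrow> 'k)" where
  "series_map \<psi> a = (\<lambda>x. if x \<in> range \<psi> then a (inv \<psi> x) else 0)"

definition morphism :: "('g::linordered_ab_group_add \<Rightarrow> ('g \<Rightarrow> 'k::linordered_field)) \<Rightarrow> ('g \<Rightarrow> 'g) \<Rightarrow> bool" where
  "morphism l \<psi> \<longleftrightarrow> ordered_group_embedding \<psi> \<and> (\<forall>g. series_map \<psi> (l g) = l (\<psi> g))"

text \<open>condition (dagger) for subgroups U \<subseteq> H; Log(h) = l(h) for h in G\<close>
definition dagger :: "('g::linordered_ab_group_add \<Rightarrow> ('g \<Rightarrow> 'k::linordered_field)) \<Rightarrow> 'g set \<Rightarrow> 'g set \<Rightarrow> bool" where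
  "dagger l U H \<longleftrightarrow> (\<forall>h\<in>H. \<forall>f \<in> series_on (above H U). f \<noteq> (\<lambda>_. 0) \<longrightarrow> series_less (l h) (series_abs f))"

end

theory Submission
  imports Defs
begin

text \<open>
  An order-preserving group embedding \<psi> transports the whole structure
  of series with anti-well-ordered support: pushing a series forward along \<psi> maps
  supports bijectively onto their images, preserves leading terms and therefore the
  sign, the absolute value and the ordering of series.  Given h1 = \<psi> h in \<psi>(H) and
  a nonzero f1 supported in \<psi>(H)^{>\<psi>(U)}, the support of f1 lies in the range of \<psi>,
  so f1 is the push-forward of its pull-back f = f1 \<circ> \<psi>, which is a nonzero series
  supported in H^{>U}.  Condition (dagger) for U, H gives l(h) < |f|; pushing this
  inequality forward and using \<psi> \<circ> l = l \<circ> \<psi> yields l(h1) < |f1|.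

  Of the
  hypotheses, only that \<psi> is a strictly monotone morphism and that the values of
  the prelogarithmic section have anti-well-ordered support are used.
\<close>

lemma anti_wellordered_iff_max:
  "anti_wellordered (S::'g::linorder set) \<longleftrightarrow> (\<forall>Q\<subseteq>S. Q \<noteq> {} \<longrightarrow> (\<exists>m\<in>Q. \<forall>y\<in>Q. y \<le> m))"
proof
  assume "anti_wellordered S"
  then have wf: "wf {(x, y). x \<in> S \<and> y \<in> S \<and> y < x}" by (simp add: anti_wellordered_def)
  show "\<forall>Q\<subseteq>S. Q \<noteq> {} \<longrightarrow> (\<exists>m\<in>Q. \<forall>y\<in>Q. y \<le> m)"
  proof (intro allI impI)
    fix Q assume Q: "Q \<subseteq> S" "Q \<noteq> {}"
    then obtain x where "x \<in> Q" by blast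
    from wf[unfolded wf_eq_minimal, rule_format, OF this] obtain z where
      "z \<in> Q" "\<forall>y. (y, z) \<in> {(x, y). x \<in> S \<and> y \<in> S \<and> y < x} \<longrightarrow> y \<notin> Q" by blast
    then have "\<forall>y\<in>Q. y \<le> z" using Q by (auto simp: not_le[symmetric])
    with \<open>z \<in> Q\<close> show "\<exists>m\<in>Q. \<forall>y\<in>Q. y \<le> m" by blast
  qed
next
  assume max: "\<forall>Q\<subseteq>S. Q \<noteq> {} \<longrightarrow> (\<exists>m\<in>Q. \<forall>y\<in>Q. y \<le> m)"
  show "anti_wellordered S"
    unfolding anti_wellordered_def wf_eq_minimal
  proof (intro allI impI)
    fix Q :: "'g set" and x assume x: "x \<in> Q"
    show "\<exists>z\<in>Q. \<forall>y. (y, z) \<in> {(x, y). x \<in> S \<and> y \<in> S \<and> y < x} \<longrightarrow> y \<notin> Q"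
    proof (cases "Q \<inter> S = {}")
      case True then show ?thesis using x by auto
    next
      case False
      then obtain m where "m \<in> Q \<inter> S" "\<forall>y\<in>Q \<inter> S. y \<le> m" using max by (meson inf_le2)
      then show ?thesis by (auto simp: not_less[symmetric])
    qed
  qed
qed

lemma anti_wellordered_subset:
  "anti_wellordered (B::'g::linorder set) \<Longrightarrow> A \<subseteq> B \<Longrightarrow> anti_wellordered A"
  unfolding anti_wellordered_iff_max by blast

text \<open>Supports of sums are contained in unions of supports, hence this closure property.\<close>
lemma anti_wellordered_Un:
  fixes A B :: "'g::linorder set"
  assumes A: "anti_wellordered A" and B: "anti_wellordered B"
  shows "anti_wellordered (A \<union> B)"
  unfolding anti_wellordered_iff_max
proof (intro allI impI)
  fix Q assume Q: "Q \<subseteq> A \<union> B" "Q \<noteq> {}"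
  consider "Q \<inter> A = {}" | "Q \<inter> B = {}" | "Q \<inter> A \<noteq> {}" "Q \<inter> B \<noteq> {}" by blast
  then show "\<exists>m\<in>Q. \<forall>y\<in>Q. y \<le> m"
  proof cases
    case 1 with Q B show ?thesis unfolding anti_wellordered_iff_max by blast
  next
    case 2 with Q A show ?thesis unfolding anti_wellordered_iff_max by blast
  next
    case 3
    obtain a where a: "a \<in> Q \<inter> A" "\<forall>y\<in>Q \<inter> A. y \<le> a"
      using 3 A unfolding anti_wellordered_iff_max by (meson inf_le2)
    obtain b where b: "b \<in> Q \<inter> B" "\<forall>y\<in>Q \<inter> B. y \<le> b"
      using 3 B unfolding anti_wellordered_iff_max by (meson inf_le2)
    have "\<forall>y\<in>Q. y \<le> max a b" using a b Q by (auto simp: le_max_iff_disj)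
    moreover have "max a b \<in> Q" using a b by (simp add: max_def)
    ultimately show ?thesis by blast
  qed
qed

lemma anti_wellordered_vimage:
  fixes \<psi> :: "'a::linorder \<Rightarrow> 'b::linorder"
  assumes "strict_mono \<psi>" and "anti_wellordered S"
  shows "anti_wellordered (\<psi> -` S)"
proof -
  let ?R = "{(x, y). x \<in> S \<and> y \<in> S \<and> y < x}"
  have "{(x, y). x \<in> \<psi> -` S \<and> y \<in> \<psi> -` S \<and> y < x} \<subseteq> inv_image ?R \<psi>"
    using assms(1) by (auto simp: strict_mono_less)
  moreover have "wf (inv_image ?R \<psi>)"
    using assms(2) by (simp add: anti_wellordered_def wf_inv_image)
  ultimately show ?thesis unfolding anti_wellordered_def by (rule wf_subset[rotated])
qed

lemma leading_exponent:
  fixes a :: "'g::linorder \<Rightarrow> 'k::zero"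
  assumes "anti_wellordered (supp a)" and "a \<noteq> (\<lambda>_. 0)"
  obtains m where "a m \<noteq> 0" and "\<And>y. a y \<noteq> 0 \<Longrightarrow> y \<le> m"
proof -
  have "supp a \<noteq> {}" using assms(2) by (auto simp: supp_def)
  then obtain m where "m \<in> supp a" "\<forall>y\<in>supp a. y \<le> m"
    using assms(1) unfolding anti_wellordered_iff_max by blast
  then show ?thesis using that by (auto simp: supp_def)
qed

lemma val_eq_leading_exponent:
  fixes a :: "'g::linorder \<Rightarrow> 'k::zero"
  assumes "a m \<noteq> 0" and "\<And>y. a y \<noteq> 0 \<Longrightarrow> y \<le> m"
  shows "val a = m"
  unfolding val_def using assms by (intro Greatest_equality) auto

lemma series_map_apply:
  "inj \<psi> \<Longrightarrow> series_map \<psi> a (\<psi> x) = a x"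
  by (simp add: series_map_def)

lemma series_map_zero: "series_map \<psi> (\<lambda>_. 0) = (\<lambda>_. 0)"
  by (auto simp: series_map_def)

lemma series_map_eq_zero_iff:
  "inj \<psi> \<Longrightarrow> series_map \<psi> a = (\<lambda>_. 0) \<longleftrightarrow> a = (\<lambda>_. 0)"
  by (metis series_map_apply series_map_zero)

lemma series_map_neg:
  "series_map \<psi> (\<lambda>g. - (a::'g \<Rightarrow> 'k::ab_group_add) g) = (\<lambda>x. - series_map \<psi> a x)"
  by (auto simp: series_map_def)

lemma series_map_diff:
  "series_map \<psi> (\<lambda>g. (a::'g \<Rightarrow> 'k::ab_group_add) g - b g)
     = (\<lambda>x. series_map \<psi> a x - series_map \<psi> b x)"
  by (auto simp: series_map_def)

lemma series_map_pullback:
  assumes "inj \<psi>" and "supp b \<subseteq> range \<psi>"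
  shows "series_map \<psi> (\<lambda>g. b (\<psi> g)) = b"
  using assms by (auto simp: series_map_def supp_def fun_eq_iff)

lemma series_on_pullback:
  assumes "strict_mono \<psi>" and "b \<in> series_on S"
  shows "(\<lambda>g. b (\<psi> g)) \<in> series_on (\<psi> -` S)"
proof -
  have supp: "supp (\<lambda>g. b (\<psi> g)) = \<psi> -` supp b" by (auto simp: supp_def)
  have "anti_wellordered (\<psi> -` supp b)" and "\<psi> -` supp b \<subseteq> \<psi> -` S"
    using assms anti_wellordered_vimage[OF assms(1)] by (auto simp: series_on_def)
  then show ?thesis by (simp add: series_on_def supp)
qed

text \<open>The leading term of the push-forward is the image of the leading term, so the
  sign is unchanged.\<close>
lemma series_pos_map:
  fixes d :: "'g::linorder \<Rightarrow> 'k::linordered_field"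
  assumes sm: "strict_mono \<psi>" and aw: "anti_wellordered (supp d)"
  shows "series_pos (series_map \<psi> d) \<longleftrightarrow> series_pos d"
proof (cases "d = (\<lambda>_. 0)")
  case True then show ?thesis by (simp add: series_map_zero series_pos_def)
next
  case False
  have inj: "inj \<psi>" using sm by (rule strict_mono_imp_inj_on)
  obtain m where m: "d m \<noteq> 0" "\<And>y. d y \<noteq> 0 \<Longrightarrow> y \<le> m"
    using leading_exponent[OF aw False] by blast
  have "val (series_map \<psi> d) = \<psi> m"
  proof (rule val_eq_leading_exponent)
    show "series_map \<psi> d (\<psi> m) \<noteq> 0" using m(1) by (simp add: series_map_apply[OF inj])
  next
    fix x assume "series_map \<psi> d x \<noteq> 0"
    then obtain y where "x = \<psi> y" "d y \<noteq> 0"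
      by (auto simp: series_map_def inv_f_f[OF inj] split: if_splits)
    then show "x \<le> \<psi> m" using m(2) sm by (simp add: strict_mono_less_eq)
  qed
  moreover have "val d = m" using m by (rule val_eq_leading_exponent)
  ultimately show ?thesis
    using False
    by (simp add: series_pos_def series_map_apply[OF inj] series_map_eq_zero_iff[OF inj])
qed

lemma series_abs_map:
  fixes a :: "'g::linorder \<Rightarrow> 'k::linordered_field"
  assumes "strict_mono \<psi>" and "anti_wellordered (supp a)"
  shows "series_abs (series_map \<psi> a) = series_map \<psi> (series_abs a)"
proof -
  have "supp (\<lambda>g. - a g) = supp a" by (simp add: supp_def)
  then have "series_pos (series_map \<psi> (\<lambda>g. - a g)) \<longleftrightarrow> series_pos (\<lambda>g. - a g)"
    using series_pos_map[OF assms(1), of "\<lambda>g. - a g"] assms(2) by simp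
  then show ?thesis by (simp add: series_abs_def series_map_neg)
qed

lemma supp_series_abs: "supp (series_abs a) = supp a"
  by (auto simp: series_abs_def supp_def)

text \<open>The comparison of two series is decided by the sign of their difference, whose
  support is anti-well-ordered when both supports are.\<close>
lemma series_less_map:
  fixes a b :: "'g::linorder \<Rightarrow> 'k::linordered_field"
  assumes sm: "strict_mono \<psi>"
    and "anti_wellordered (supp a)" and "anti_wellordered (supp b)"
  shows "series_less (series_map \<psi> a) (series_map \<psi> b) \<longleftrightarrow> series_less a b"
proof -
  have "supp (\<lambda>g. b g - a g) \<subseteq> supp b \<union> supp a" by (auto simp: supp_def)
  then have "anti_wellordered (supp (\<lambda>g. b g - a g))"
    using assms anti_wellordered_Un anti_wellordered_subset by metis
  then show ?thesis
    using series_pos_map[OF sm] by (simp add: series_less_def series_map_diff[symmetric])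
qed

lemma vimage_above_image:
  assumes "strict_mono \<psi>"
  shows "\<psi> -` above (\<psi> ` H) (\<psi> ` U) = above H U"
proof -
  have "inj \<psi>" using assms by (rule strict_mono_imp_inj_on)
  then show ?thesis
    using assms by (auto simp: above_def inj_image_mem_iff strict_mono_less)
qed

lemma above_subset_range: "above (\<psi> ` H) A \<subseteq> range \<psi>"
  by (auto simp: above_def)

theorem lemma8:
  fixes l :: "'g::linordered_ab_group_add \<Rightarrow> ('g \<Rightarrow> 'k::linordered_field)"
    and \<psi> :: "'g \<Rightarrow> 'g" and U H :: "'g set"
  assumes "prelog_section l"
    and "morphism l \<psi>"
    and "add_subgroup U" and "add_subgroup H" and "U \<subseteq> H"
    and "dagger l U H"
  shows "dagger l (\<psi> ` U) (\<psi> ` H)"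
  unfolding dagger_def
proof (intro ballI impI)
  have sm: "strict_mono \<psi>" using assms(2) by (simp add: morphism_def ordered_group_embedding_def)
  have inj: "inj \<psi>" using sm by (rule strict_mono_imp_inj_on)
  fix h1 and f1 :: "'g \<Rightarrow> 'k"
  assume "h1 \<in> \<psi> ` H" and f1: "f1 \<in> series_on (above (\<psi> ` H) (\<psi> ` U))" and "f1 \<noteq> (\<lambda>_. 0)"
  then obtain h where h: "h \<in> H" "h1 = \<psi> h" by blast
  define f where "f = (\<lambda>g. f1 (\<psi> g))"
  have f1_eq: "f1 = series_map \<psi> f"
    using f1 above_subset_range series_map_pullback[OF inj] by (fastforce simp: f_def series_on_def)
  have f: "f \<in> series_on (above H U)"
    using series_on_pullback[OF sm f1] by (simp add: f_def vimage_above_image[OF sm])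
  moreover have "f \<noteq> (\<lambda>_. 0)" using \<open>f1 \<noteq> _\<close> f1_eq series_map_zero by auto
  ultimately have less: "series_less (l h) (series_abs f)" using assms(6) h(1) by (simp add: dagger_def)
  have aw_f: "anti_wellordered (supp f)" and aw_l: "anti_wellordered (supp (l h))"
    using f assms(1) by (auto simp: series_on_def prelog_section_def)
  have "l h1 = series_map \<psi> (l h)" using assms(2) h(2) by (simp add: morphism_def)
  moreover have "series_abs f1 = series_map \<psi> (series_abs f)"
    using f1_eq series_abs_map[OF sm aw_f] by simp
  ultimately show "series_less (l h1) (series_abs f1)"
    using less series_less_map[OF sm aw_l] aw_f by (simp add: supp_series_abs)
qed

end
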